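(* For every $f\in\mathcal{F}_3$ and every $\mathbf{x}\in[0,1]^3$, letting $k\in\{1,2,3\}$ be the unique index with $f\in\mathcal{S}_3^k$, $$f^{+}(\mathbf{x})=\min\Big(\min_{i\in\{4k-2,4k-1,4k,4k+1\}}\Big(\lambda_{i0}+\sum_{j=1}^3\lambda_{ij}x_j\Big),\ \min_{\ell\in\{1,14\}}\Big(\lambda_{\ell0}+\sum_{j=1}^3\lambda_{\ell j}x_j\Big)\Big),$$ where the vectors $\boldsymbol\lambda_i=(\lambda_{i0},\lambda_{i1},\lambda_{i2},\lambda_{i3})$ are: $\boldsymbol\lambda_1=(0,f(1),f(2),f(3))$; $\boldsymbol\lambda_2=(f(2)-f(2|3),\,f(1)-f(2)+f(2|3),\,f(2|3),\,f(3|2))$; $\boldsymbol\lambda_3=(f(1)-f(1|3),\,f(1|3),\,f(2|3),\,f(3|1))$; $\boldsymbol\lambda_4=(f(2)-f(2|1),\,f(1|2),\,f(2|1),\,f(3|2))$; $\boldsymbol\lambda_5=(f(2,3)-f(3|1)-f(2|1),\,f(2|1)+f(1,3)-f(2,3),\,f(2|1),\,f(3|1))$; $\boldsymbol\lambda_6=(f(1)-f(1|3),\,f(1|3),\,f(2)-f(1)+f(1|3),\,f(3|1))$; $\boldsymbol\lambda_7=(f(2)-f(2|3),\,f(1|3),\,f(2|3),\,f(3|2))$; $\boldsymbol\lambda_8=(f(2)-f(2|1),\,f(1|2),\,f(2|1),\,f(3|1))$; $\boldsymbol\lambda_9=(f(1,3)-f(1|2)-f(3|2),\,f(1|2),\,f(1|2)+f(2,3)-f(1,3),\,f(3|2))$;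 $\boldsymbol\lambda_{10}=(f(1)-f(1|2),\,f(1|2),\,f(2|1),\,f(3)-f(2)+f(2|1))$; $\boldsymbol\lambda_{11}=(f(2)-f(2|3),\,f(1|2),\,f(2|3),\,f(3|2))$; $\boldsymbol\lambda_{12}=(f(3)-f(3|1),\,f(1|3),\,f(2|1),\,f(3|1))$; $\boldsymbol\lambda_{13}=(f(1,2)-f(1|3)-f(2|3),\,f(1|3),\,f(2|3),\,f(2|3)+f(1,3)-f(1,2))$; $\boldsymbol\lambda_{14}=(f(1,2)+f(1,3)+f(2,3)-2,\,1-f(2,3),\,1-f(1,3),\,1-f(1,2))$.
   Context: $[n]=\{1,\dots,n\}$. A set function $f:2^{[n]}\to\mathbb{R}_+$ is monotone if $f(S)\le f(T)$ for $S\subseteq T$, submodular if $f(S)+f(T)\ge f(S\cap T)+f(S\cup T)$. $\mathcal{F}_n$ is the set of monotone submodular $f:2^{[n]}\to\mathbb{R}_+$ with $f(\emptyset)=0$, $f([n])=1$. Write $f(i)=f(\{i\})$, $f(i,j)=f(\{i,j\})$, $f(i|j)=f(\{i,j\})-f(\{j\})$. Define $\mathcal{F}_3^1=\{f\in\mathcal{F}_3: f(3|2)\ge f(3|1),\ f(2|3)\ge f(2|1)\}$, $\mathcal{F}_3^2=\{f\in\mathcal{F}_3: f(3|1)\ge f(3|2),\ f(1|3)\ge f(1|2)\}$, $\mathcal{F}_3^3=\{f\in\mathcal{F}_3: f(2|1)\ge f(2|3),\ f(1|2)\ge f(1|3)\}$, and $\mathcal{S}_3^k=\mathcal{F}_3^k\setminus\bigcup_{j<k}\mathcal{F}_3^j$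 for $k=1,2,3$ (these partition $\mathcal{F}_3$). For $\mathbf{x}\in[0,1]^n$, the concave closure is $f^{+}(\mathbf{x})=\max\sum_{S\subseteq[n]}\theta(S)f(S)$ over $\theta:2^{[n]}\to\mathbb{R}_{\ge0}$ with $\sum_S\theta(S)=1$ and $\sum_{S\ni i}\theta(S)=x_i$ for all $i\in[n]$. *)

theory Defs
  imports Complex_Main
begin

text \<open>Set functions on the ground set [n] = {1..n} are modelled as nat set => real;
  only their values on subsets of {1..n} matter.\<close>

definition monotone_sf :: "nat \<Rightarrow> (nat set \<Rightarrow> real) \<Rightarrow> bool" where
  "monotone_sf n f \<longleftrightarrow> (\<forall>S T. S \<subseteq> T \<and> T \<subseteq> {1..n} \<longrightarrow> f S \<le> f T)"

definition submodular_sf :: "nat \<Rightarrow> (nat set \<Rightarrow> real) \<Rightarrow> bool" where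
  "submodular_sf n f \<longleftrightarrow> (\<forall>S T. S \<subseteq> {1..n} \<and> T \<subseteq> {1..n} \<longrightarrow>
      f S + f T \<ge> f (S \<inter> T) + f (S \<union> T))"

definition Fcl :: "nat \<Rightarrow> (nat set \<Rightarrow> real) set" where
  "Fcl n = {f. monotone_sf n f \<and> submodular_sf n f \<and> (\<forall>S\<subseteq>{1..n}. f S \<ge> 0)
              \<and> f {} = 0 \<and> f {1..n} = 1}"

definition marg :: "(nat set \<Rightarrow> real) \<Rightarrow> nat \<Rightarrow> nat \<Rightarrow> real" where
  "marg f i j = f {i, j} - f {j}"

definition F31 :: "(nat set \<Rightarrow> real) set" where
  "F31 = {f \<in> Fcl 3. marg f 3 2 \<ge> marg f 3 1 \<and> marg f 2 3 \<ge> marg f 2 1}"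
definition F32 :: "(nat set \<Rightarrow> real) set" where
  "F32 = {f \<in> Fcl 3. marg f 3 1 \<ge> marg f 3 2 \<and> marg f 1 3 \<ge> marg f 1 2}"
definition F33 :: "(nat set \<Rightarrow> real) set" where
  "F33 = {f \<in> Fcl 3. marg f 2 1 \<ge> marg f 2 3 \<and> marg f 1 2 \<ge> marg f 1 3}"

definition S3 :: "nat \<Rightarrow> (nat set \<Rightarrow> real) set" where
  "S3 k = (if k = 1 then F31 else if k = 2 then F32 - F31
           else if k = 3 then F33 - (F31 \<union> F32) else {})"

definition concave_closure :: "nat \<Rightarrow> (nat set \<Rightarrow> real) \<Rightarrow> (nat \<Rightarrow> real) \<Rightarrow> real" where
  "concave_closure n f x = Sup {(\<Sum>S\<in>Pow {1..n}. \<theta> S * f S) | \<theta>.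
      (\<forall>S. \<theta> S \<ge> 0) \<and> (\<Sum>S\<in>Pow {1..n}. \<theta> S) = 1 \<and>
      (\<forall>i\<in>{1..n}. (\<Sum>S\<in>{S\<in>Pow {1..n}. i \<in> S}. \<theta> S) = x i)}"

text \<open>The coefficient vectors lambda_1, ..., lambda_14 (list index i-1, entries 0..3).\<close>
definition lamvecs :: "(nat set \<Rightarrow> real) \<Rightarrow> real list list" where
  "lamvecs f = [
    [0, f {1}, f {2}, f {3}],
    [f {2} - marg f 2 3, f {1} - f {2} + marg f 2 3, marg f 2 3, marg f 3 2],
    [f {1} - marg f 1 3, marg f 1 3, marg f 2 3, marg f 3 1],
    [f {2} - marg f 2 1, marg f 1 2, marg f 2 1, marg f 3 2],
    [f {2,3} - marg f 3 1 - marg f 2 1, marg f 2 1 + f {1,3} - f {2,3}, marg f 2 1, marg f 3 1],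
    [f {1} - marg f 1 3, marg f 1 3, f {2} - f {1} + marg f 1 3, marg f 3 1],
    [f {2} - marg f 2 3, marg f 1 3, marg f 2 3, marg f 3 2],
    [f {2} - marg f 2 1, marg f 1 2, marg f 2 1, marg f 3 1],
    [f {1,3} - marg f 1 2 - marg f 3 2, marg f 1 2, marg f 1 2 + f {2,3} - f {1,3}, marg f 3 2],
    [f {1} - marg f 1 2, marg f 1 2, marg f 2 1, f {3} - f {2} + marg f 2 1],
    [f {2} - marg f 2 3, marg f 1 2, marg f 2 3, marg f 3 2],
    [f {3} - marg f 3 1, marg f 1 3, marg f 2 1, marg f 3 1],
    [f {1,2} - marg f 1 3 - marg f 2 3, marg f 1 3, marg f 2 3, marg f 2 3 + f {1,3} - f {1,2}],
    [f {1,2} + f {1,3} + f {2,3} - 2, 1 - f {2,3}, 1 - f {1,3}, 1 - f {1,2}]]"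

definition lam :: "(nat set \<Rightarrow> real) \<Rightarrow> nat \<Rightarrow> nat \<Rightarrow> real" where
  "lam f i j = lamvecs f ! (i - 1) ! j"

definition aff :: "(nat set \<Rightarrow> real) \<Rightarrow> nat \<Rightarrow> (nat \<Rightarrow> real) \<Rightarrow> real" where
  "aff f i x = lam f i 0 + (\<Sum>j=1..3. lam f i j * x j)"

end

theory Submission
  imports Defs
begin

(* The concave closure is a linear program over distributions theta on the subsets of [n] with
   marginals x.  By weak duality, an affine function c_0 + sum_j c_j x_j dominating f at every vertex
   of the cube bounds every feasible value; submodularity and the inequalities defining F_3^k make each
   lambda_i, i in {4k-2..4k+1} or i in {1,14}, such a majorant.  For equality, the simplices
   x_1 + x_2 + x_3 <= 1 and x_1 + x_2 + x_3 >= 2 together with the four tetrahedra into which the planes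
   x_k + x_j = 1 (j ~= k) cut the octahedron 1 <= x_1 + x_2 + x_3 <= 2 triangulate the cube.  The
   barycentric coordinates of x in its cell form a feasible theta supported on vertices at which the
   matching lambda_i agrees with f, so that lambda_i attains the bound. *)

definition distrib_with_marginals :: "nat \<Rightarrow> (nat \<Rightarrow> real) \<Rightarrow> (nat set \<Rightarrow> real) \<Rightarrow> bool" where
  "distrib_with_marginals n x \<theta> \<longleftrightarrow> (\<forall>S. 0 \<le> \<theta> S) \<and> (\<Sum>S\<in>Pow {1..n}. \<theta> S) = 1 \<and>
     (\<forall>i\<in>{1..n}. (\<Sum>S\<in>{S\<in>Pow {1..n}. i \<in> S}. \<theta> S) = x i)"

(* The affine function x \<mapsto> c 0 + (\<Sum>j. c j * x j) evaluated at the indicator vector of S. *)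
definition affine_indicator :: "(nat \<Rightarrow> real) \<Rightarrow> nat set \<Rightarrow> real" where
  "affine_indicator c S = c 0 + (\<Sum>j\<in>S. c j)"

definition interpolates :: "nat \<Rightarrow> (nat set \<Rightarrow> real) \<Rightarrow> (nat \<Rightarrow> real) \<Rightarrow> (nat \<Rightarrow> real) \<Rightarrow> bool" where
  "interpolates n f c x \<longleftrightarrow> (\<exists>\<theta>. distrib_with_marginals n x \<theta> \<and>
     (\<forall>S\<subseteq>{1..n}. \<theta> S \<noteq> 0 \<longrightarrow> f S = affine_indicator c S))"

lemma expectation_affine_indicator:
  assumes "distrib_with_marginals n x \<theta>"
  shows "(\<Sum>S\<in>Pow {1..n}. \<theta> S * affine_indicator c S) = c 0 + (\<Sum>j=1..n. c j * x j)"
proof -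
  have "(\<Sum>S\<in>Pow {1..n}. \<theta> S * affine_indicator c S)
      = c 0 * (\<Sum>S\<in>Pow {1..n}. \<theta> S) + (\<Sum>S\<in>Pow {1..n}. \<Sum>j\<in>{j\<in>{1..n}. j \<in> S}. \<theta> S * c j)"
  proof -
    have "\<theta> S * affine_indicator c S = \<theta> S * c 0 + (\<Sum>j\<in>{j\<in>{1..n}. j \<in> S}. \<theta> S * c j)"
      if "S \<in> Pow {1..n}" for S
    proof -
      have "{j\<in>{1..n}. j \<in> S} = S" using that by auto
      then show ?thesis by (simp add: affine_indicator_def distrib_left sum_distrib_left)
    qed
    then show ?thesis
      by (simp add: sum.distrib flip: sum_distrib_right)
  qed
  also have "\<dots> = c 0 + (\<Sum>j=1..n. \<Sum>S\<in>{S\<in>Pow {1..n}. j \<in> S}. \<theta> S * c j)"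
    using assms sum.swap_restrict[of "Pow {1..n}" "{1..n}" "\<lambda>S j. \<theta> S * c j" "\<lambda>S j. j \<in> S"]
    by (simp add: distrib_with_marginals_def)
  also have "\<dots> = c 0 + (\<Sum>j=1..n. c j * x j)"
  proof -
    have "(\<Sum>S\<in>{S\<in>Pow {1..n}. j \<in> S}. \<theta> S * c j) = c j * x j" if "j \<in> {1..n}" for j
      using assms that unfolding distrib_with_marginals_def sum_distrib_right[symmetric] by simp
    then show ?thesis by simp
  qed
  finally show ?thesis .
qed

lemma concave_closure_eq_Min_majorants:
  fixes c :: "nat \<Rightarrow> nat \<Rightarrow> real"
  assumes "finite A" "i\<^sub>0 \<in> A"
    and majorant: "\<And>i S. i \<in> A \<Longrightarrow> S \<subseteq> {1..n} \<Longrightarrow> f S \<le> affine_indicator (c i) S"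
    and "interpolates n f (c i\<^sub>0) x"
  shows "concave_closure n f x = Min ((\<lambda>i. c i 0 + (\<Sum>j=1..n. c i j * x j)) ` A)"
proof -
  define m where "m = Min ((\<lambda>i. c i 0 + (\<Sum>j=1..n. c i j * x j)) ` A)"
  define V where "V = {(\<Sum>S\<in>Pow {1..n}. \<theta> S * f S) | \<theta>. distrib_with_marginals n x \<theta>}"
  have le_m: "w \<le> m" if "w \<in> V" for w
  proof -
    obtain \<eta> where \<eta>: "distrib_with_marginals n x \<eta>" and w: "w = (\<Sum>S\<in>Pow {1..n}. \<eta> S * f S)"
      using \<open>w \<in> V\<close> by (auto simp: V_def)
    have "w \<le> c i 0 + (\<Sum>j=1..n. c i j * x j)" if "i \<in> A" for i
    proof -
      have "w \<le> (\<Sum>S\<in>Pow {1..n}. \<eta> S * affine_indicator (c i) S)"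
        unfolding w using \<eta> majorant[OF that]
        by (intro sum_mono mult_left_mono) (auto simp: distrib_with_marginals_def)
      then show ?thesis using expectation_affine_indicator[OF \<eta>] by simp
    qed
    then show ?thesis
      unfolding m_def using assms(1,2) by (subst Min_ge_iff) auto
  qed
  obtain \<theta> where \<theta>: "distrib_with_marginals n x \<theta>"
    and tight: "\<And>S. S \<subseteq> {1..n} \<Longrightarrow> \<theta> S \<noteq> 0 \<Longrightarrow> f S = affine_indicator (c i\<^sub>0) S"
    using assms(4) by (auto simp: interpolates_def)
  define v where "v = (\<Sum>S\<in>Pow {1..n}. \<theta> S * f S)"
  have "v \<in> V" using \<theta> unfolding V_def v_def by blast
  have "v = (\<Sum>S\<in>Pow {1..n}. \<theta> S * affine_indicator (c i\<^sub>0) S)"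
    unfolding v_def using tight by (intro sum.cong) auto
  also have "\<dots> = c i\<^sub>0 0 + (\<Sum>j=1..n. c i\<^sub>0 j * x j)"
    by (rule expectation_affine_indicator[OF \<theta>])
  finally have "m \<le> v"
    unfolding m_def using assms(1,2) by (auto intro: Min_le)
  then have "v = m"
    using le_m[OF \<open>v \<in> V\<close>] by simp
  then have "Sup V = m"
    using \<open>v \<in> V\<close> le_m by (intro cSup_eq_maximum) auto
  then show ?thesis
    by (simp add: concave_closure_def V_def m_def distrib_with_marginals_def)
qed

lemma Pow_1_3: "Pow {1..3::nat} = {{},{1},{2},{3},{1,2},{1,3},{2,3},{1,2,3}}"
proof -
  have "{1..3::nat} = {1,2,3}" by auto
  then show ?thesis by (simp add: Pow_insert insert_commute)
qed

lemma subset_1_3_cases: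
  fixes S :: "nat set"
  assumes "S \<subseteq> {1..3}"
  obtains "S = {}" | "S = {1}" | "S = {2}" | "S = {3}" | "S = {1,2}" | "S = {1,3}" | "S = {2,3}"
    | "S = {1,2,3}"
proof -
  have "S \<in> Pow {1..3}" using assms by simp
  then show ?thesis using that unfolding Pow_1_3 by simp blast
qed

lemma Fcl3_inequalities:
  assumes "f \<in> Fcl 3"
  shows "f {} = 0" "f {1,2,3} = 1"
    and "f {1,2} \<le> f {1} + f {2}" "f {1,3} \<le> f {1} + f {3}" "f {2,3} \<le> f {2} + f {3}"
      "1 + f {1} \<le> f {1,2} + f {1,3}" "1 + f {2} \<le> f {1,2} + f {2,3}"
      "1 + f {3} \<le> f {1,3} + f {2,3}"
      "1 \<le> f {1} + f {2,3}" "1 \<le> f {2} + f {1,3}" "1 \<le> f {3} + f {1,2}"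
proof -
  have ground: "{1..3::nat} = {1,2,3}" by auto
  have sub: "f (S \<inter> T) + f (S \<union> T) \<le> f S + f T" if "S \<subseteq> {1,2,3}" "T \<subseteq> {1,2,3}" for S T
    using assms that unfolding Fcl_def submodular_sf_def ground by blast
  show empty: "f {} = 0" and top: "f {1,2,3} = 1"
    using assms unfolding Fcl_def ground by auto
  show "f {1,2} \<le> f {1} + f {2}" "f {1,3} \<le> f {1} + f {3}" "f {2,3} \<le> f {2} + f {3}"
      "1 + f {1} \<le> f {1,2} + f {1,3}" "1 + f {2} \<le> f {1,2} + f {2,3}"
      "1 + f {3} \<le> f {1,3} + f {2,3}"
      "1 \<le> f {1} + f {2,3}" "1 \<le> f {2} + f {1,3}" "1 \<le> f {3} + f {1,2}"
    using sub[of "{1}" "{2}"] sub[of "{1}" "{3}"] sub[of "{2}" "{3}"]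
      sub[of "{1,2}" "{1,3}"] sub[of "{1,2}" "{2,3}"] sub[of "{1,3}" "{2,3}"]
      sub[of "{1}" "{2,3}"] sub[of "{2}" "{1,3}"] sub[of "{3}" "{1,2}"] empty top
    by (simp_all add: insert_commute)
qed

lemma sum_Pow_1_3:
  "(\<Sum>S\<in>Pow {1..3::nat}. g S) = g {} + g {1} + g {2} + g {3} + g {1,2} + g {1,3} + g {2,3} + g {1,2,3}"
  using Pow_1_3
  by (simp add: sum.insert_if doubleton_eq_iff insert_commute add.assoc,
      auto simp: doubleton_eq_iff insert_eq_iff)

lemma distrib_with_marginals_3_iff:
  "distrib_with_marginals 3 x \<theta> \<longleftrightarrow> (\<forall>S. 0 \<le> \<theta> S) \<and>
     \<theta> {} + \<theta> {1} + \<theta> {2} + \<theta> {3} + \<theta> {1,2} + \<theta> {1,3} + \<theta> {2,3} + \<theta> {1,2,3} = 1 \<and>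
     \<theta> {1} + \<theta> {1,2} + \<theta> {1,3} + \<theta> {1,2,3} = x 1 \<and>
     \<theta> {2} + \<theta> {1,2} + \<theta> {2,3} + \<theta> {1,2,3} = x 2 \<and>
     \<theta> {3} + \<theta> {1,3} + \<theta> {2,3} + \<theta> {1,2,3} = x 3"
proof -
  have "{1..3::nat} = {1,2,3}" by auto
  then have ball: "(\<forall>i\<in>{1..3::nat}. P i) \<longleftrightarrow> P 1 \<and> P 2 \<and> P 3" for P
    by simp
  have fin: "finite (Pow {1..3::nat})" by simp
  show ?thesis
    unfolding distrib_with_marginals_def ball sum.inter_filter[OF fin] sum_Pow_1_3 by simp
qed

definition weights3 :: "real \<Rightarrow> real \<Rightarrow> real \<Rightarrow> real \<Rightarrow> real \<Rightarrow> real \<Rightarrow> real \<Rightarrow> real \<Rightarrow> nat set \<Rightarrow> real" where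
  "weights3 p p\<^sub>1 p\<^sub>2 p\<^sub>3 p\<^sub>1\<^sub>2 p\<^sub>1\<^sub>3 p\<^sub>2\<^sub>3 p\<^sub>1\<^sub>2\<^sub>3 S =
     (if 1 \<in> S then (if 2 \<in> S then (if 3 \<in> S then p\<^sub>1\<^sub>2\<^sub>3 else p\<^sub>1\<^sub>2) else (if 3 \<in> S then p\<^sub>1\<^sub>3 else p\<^sub>1))
      else (if 2 \<in> S then (if 3 \<in> S then p\<^sub>2\<^sub>3 else p\<^sub>2) else (if 3 \<in> S then p\<^sub>3 else p)))"

lemma interpolates_weights3:
  assumes nonneg: "0 \<le> p" "0 \<le> p\<^sub>1" "0 \<le> p\<^sub>2" "0 \<le> p\<^sub>3" "0 \<le> p\<^sub>1\<^sub>2" "0 \<le> p\<^sub>1\<^sub>3" "0 \<le> p\<^sub>2\<^sub>3" "0 \<le> p\<^sub>1\<^sub>2\<^sub>3"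
    and total: "p + p\<^sub>1 + p\<^sub>2 + p\<^sub>3 + p\<^sub>1\<^sub>2 + p\<^sub>1\<^sub>3 + p\<^sub>2\<^sub>3 + p\<^sub>1\<^sub>2\<^sub>3 = 1"
    and marginals: "p\<^sub>1 + p\<^sub>1\<^sub>2 + p\<^sub>1\<^sub>3 + p\<^sub>1\<^sub>2\<^sub>3 = x 1" "p\<^sub>2 + p\<^sub>1\<^sub>2 + p\<^sub>2\<^sub>3 + p\<^sub>1\<^sub>2\<^sub>3 = x 2"
      "p\<^sub>3 + p\<^sub>1\<^sub>3 + p\<^sub>2\<^sub>3 + p\<^sub>1\<^sub>2\<^sub>3 = x 3"
    and tight: "p \<noteq> 0 \<Longrightarrow> f {} = affine_indicator c {}"
      "p\<^sub>1 \<noteq> 0 \<Longrightarrow> f {1} = affine_indicator c {1}" "p\<^sub>2 \<noteq> 0 \<Longrightarrow> f {2} = affine_indicator c {2}"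
      "p\<^sub>3 \<noteq> 0 \<Longrightarrow> f {3} = affine_indicator c {3}" "p\<^sub>1\<^sub>2 \<noteq> 0 \<Longrightarrow> f {1,2} = affine_indicator c {1,2}"
      "p\<^sub>1\<^sub>3 \<noteq> 0 \<Longrightarrow> f {1,3} = affine_indicator c {1,3}" "p\<^sub>2\<^sub>3 \<noteq> 0 \<Longrightarrow> f {2,3} = affine_indicator c {2,3}"
      "p\<^sub>1\<^sub>2\<^sub>3 \<noteq> 0 \<Longrightarrow> f {1,2,3} = affine_indicator c {1,2,3}"
  shows "interpolates 3 f c x"
proof -
  let ?\<theta> = "weights3 p p\<^sub>1 p\<^sub>2 p\<^sub>3 p\<^sub>1\<^sub>2 p\<^sub>1\<^sub>3 p\<^sub>2\<^sub>3 p\<^sub>1\<^sub>2\<^sub>3"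
  have "distrib_with_marginals 3 x ?\<theta>"
    unfolding distrib_with_marginals_3_iff using nonneg total marginals by (simp add: weights3_def)
  moreover have "f S = affine_indicator c S" if "S \<subseteq> {1..3}" "?\<theta> S \<noteq> 0" for S
    using that(2) tight by (cases rule: subset_1_3_cases[OF that(1)]) (simp_all add: weights3_def)
  ultimately show ?thesis
    unfolding interpolates_def by blast
qed

lemmas lam_affine_indicator_simps = affine_indicator_def lam_def lamvecs_def marg_def

lemma Fcl3_majorants:
  assumes "f \<in> Fcl 3" "i \<in> {1,14}" "S \<subseteq> {1..3}"
  shows "f S \<le> affine_indicator (lam f i) S"
proof -
  from assms(2) consider "i = 1" | "i = 14" by blast
  then show ?thesis
    using Fcl3_inequalities[OF assms(1)]
    by cases (cases rule: subset_1_3_cases[OF assms(3)];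
        simp add: lam_affine_indicator_simps insert_commute)+
qed

lemma F31_majorants:
  assumes "f \<in> F31" "i \<in> {2..5}" "S \<subseteq> {1..3}"
  shows "f S \<le> affine_indicator (lam f i) S"
proof -
  from assms(2) consider "i = 2" | "i = 3" | "i = 4" | "i = 5" by fastforce
  then show ?thesis
    using assms(1) Fcl3_inequalities[of f] unfolding F31_def
    by cases (cases rule: subset_1_3_cases[OF assms(3)];
        simp add: lam_affine_indicator_simps insert_commute)+
qed

lemma F32_majorants:
  assumes "f \<in> F32" "i \<in> {6..9}" "S \<subseteq> {1..3}"
  shows "f S \<le> affine_indicator (lam f i) S"
proof -
  from assms(2) consider "i = 6" | "i = 7" | "i = 8" | "i = 9" by fastforce
  then show ?thesis
    using assms(1) Fcl3_inequalities[of f] unfolding F32_def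
    by cases (cases rule: subset_1_3_cases[OF assms(3)];
        simp add: lam_affine_indicator_simps insert_commute)+
qed

lemma F33_majorants:
  assumes "f \<in> F33" "i \<in> {10..13}" "S \<subseteq> {1..3}"
  shows "f S \<le> affine_indicator (lam f i) S"
proof -
  from assms(2) consider "i = 10" | "i = 11" | "i = 12" | "i = 13" by fastforce
  then show ?thesis
    using assms(1) Fcl3_inequalities[of f] unfolding F33_def
    by cases (cases rule: subset_1_3_cases[OF assms(3)];
        simp add: lam_affine_indicator_simps insert_commute)+
qed

lemma lam_majorants:
  assumes "f \<in> Fcl 3" "k \<in> {1,2,3}" "f \<in> S3 k" "i \<in> {4*k-2..4*k+1} \<union> {1,14}" "S \<subseteq> {1..3}"
  shows "f S \<le> affine_indicator (lam f i) S"
proof (cases "i \<in> {1,14}")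
  case True
  then show ?thesis using Fcl3_majorants assms(1,5) by blast
next
  case False
  with assms(2-4) show ?thesis
    using F31_majorants F32_majorants F33_majorants assms(5) by (auto simp: S3_def)
qed

lemma interpolates_lower_corner:
  assumes "f {} = 0" "\<forall>i\<in>{1..3}. 0 \<le> x i" "x 1 + x 2 + x 3 \<le> 1"
  shows "interpolates 3 f (lam f 1) x"
  using assms
  by (intro interpolates_weights3[of "1 - (x 1 + x 2 + x 3)" "x 1" "x 2" "x 3" 0 0 0 0])
    (auto simp: lam_affine_indicator_simps)

lemma interpolates_upper_corner:
  assumes "f {1,2,3} = 1" "\<forall>i\<in>{1..3}. x i \<le> 1" "2 \<le> x 1 + x 2 + x 3"
  shows "interpolates 3 f (lam f 14) x"
  using assms
  by (intro interpolates_weights3[of 0 0 0 0 "1 - x 3" "1 - x 2" "1 - x 1" "x 1 + x 2 + x 3 - 2"])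
    (auto simp: lam_affine_indicator_simps insert_commute)

lemma interpolates_octahedron_1:
  assumes "f {} = 0" "f {1,2,3} = 1" "\<forall>i\<in>{1..3}. 0 \<le> x i \<and> x i \<le> 1"
    and "1 \<le> x 1 + x 2 + x 3" "x 1 + x 2 + x 3 \<le> 2"
  shows "\<exists>i\<in>{2..5}. interpolates 3 f (lam f i) x"
proof -
  have x: "0 \<le> x 1" "x 1 \<le> 1" "0 \<le> x 2" "x 2 \<le> 1" "0 \<le> x 3" "x 3 \<le> 1"
    using assms(3) by auto
  consider (below_below) "x 1 + x 2 \<le> 1" "x 1 + x 3 \<le> 1" | (below_above) "x 1 + x 2 \<le> 1" "1 \<le> x 1 + x 3"
    | (above_below) "1 \<le> x 1 + x 2" "x 1 + x 3 \<le> 1" | (above_above) "1 \<le> x 1 + x 2" "1 \<le> x 1 + x 3"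
    by linarith
  then show ?thesis
  proof cases
    case below_below
    then show ?thesis
      using x assms(1,2,4,5)
      by (intro bexI[of _ 2] interpolates_weights3[of 0 "x 1" "1 - x 1 - x 3" "1 - x 1 - x 2" 0 0 "x 1 + x 2 + x 3 - 1" 0])
        (simp_all add: lam_affine_indicator_simps insert_commute)
  next
    case below_above
    then show ?thesis
      using x assms(1,2,4,5)
      by (intro bexI[of _ 3] interpolates_weights3[of 0 "1 - x 3" 0 "1 - x 1 - x 2" 0 "x 1 + x 3 - 1" "x 2" 0])
        (simp_all add: lam_affine_indicator_simps insert_commute)
  next
    case above_below
    then show ?thesis
      using x assms(1,2,4,5)
      by (intro bexI[of _ 4] interpolates_weights3[of 0 "1 - x 2" "1 - x 1 - x 3" 0 "x 1 + x 2 - 1" 0 "x 3" 0])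
        (simp_all add: lam_affine_indicator_simps insert_commute)
  next
    case above_above
    then show ?thesis
      using x assms(1,2,4,5)
      by (intro bexI[of _ 5] interpolates_weights3[of 0 "2 - (x 1 + x 2 + x 3)" 0 0 "x 1 + x 2 - 1" "x 1 + x 3 - 1" "1 - x 1" 0])
        (simp_all add: lam_affine_indicator_simps insert_commute)
  qed
qed

lemma interpolates_octahedron_2:
  assumes "f {} = 0" "f {1,2,3} = 1" "\<forall>i\<in>{1..3}. 0 \<le> x i \<and> x i \<le> 1"
    and "1 \<le> x 1 + x 2 + x 3" "x 1 + x 2 + x 3 \<le> 2"
  shows "\<exists>i\<in>{6..9}. interpolates 3 f (lam f i) x"
proof -
  have x: "0 \<le> x 1" "x 1 \<le> 1" "0 \<le> x 2" "x 2 \<le> 1" "0 \<le> x 3" "x 3 \<le> 1"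
    using assms(3) by auto
  consider (below_below) "x 2 + x 1 \<le> 1" "x 2 + x 3 \<le> 1" | (below_above) "x 2 + x 1 \<le> 1" "1 \<le> x 2 + x 3"
    | (above_below) "1 \<le> x 2 + x 1" "x 2 + x 3 \<le> 1" | (above_above) "1 \<le> x 2 + x 1" "1 \<le> x 2 + x 3"
    by linarith
  then show ?thesis
  proof cases
    case below_below
    then show ?thesis
      using x assms(1,2,4,5)
      by (intro bexI[of _ 6] interpolates_weights3[of 0 "1 - x 2 - x 3" "x 2" "1 - x 2 - x 1" 0 "x 1 + x 2 + x 3 - 1" 0 0])
        (simp_all add: lam_affine_indicator_simps insert_commute)
  next
    case below_above
    then show ?thesis
      using x assms(1,2,4,5)
      by (intro bexI[of _ 7] interpolates_weights3[of 0 0 "1 - x 3" "1 - x 2 - x 1" 0 "x 1" "x 2 + x 3 - 1" 0])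
        (simp_all add: lam_affine_indicator_simps insert_commute)
  next
    case above_below
    then show ?thesis
      using x assms(1,2,4,5)
      by (intro bexI[of _ 8] interpolates_weights3[of 0 "1 - x 2 - x 3" "1 - x 1" 0 "x 1 + x 2 - 1" "x 3" 0 0])
        (simp_all add: lam_affine_indicator_simps insert_commute)
  next
    case above_above
    then show ?thesis
      using x assms(1,2,4,5)
      by (intro bexI[of _ 9] interpolates_weights3[of 0 0 "2 - (x 1 + x 2 + x 3)" 0 "x 1 + x 2 - 1" "1 - x 2" "x 2 + x 3 - 1" 0])
        (simp_all add: lam_affine_indicator_simps insert_commute)
  qed
qed

lemma interpolates_octahedron_3:
  assumes "f {} = 0" "f {1,2,3} = 1" "\<forall>i\<in>{1..3}. 0 \<le> x i \<and> x i \<le> 1"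
    and "1 \<le> x 1 + x 2 + x 3" "x 1 + x 2 + x 3 \<le> 2"
  shows "\<exists>i\<in>{10..13}. interpolates 3 f (lam f i) x"
proof -
  have x: "0 \<le> x 1" "x 1 \<le> 1" "0 \<le> x 2" "x 2 \<le> 1" "0 \<le> x 3" "x 3 \<le> 1"
    using assms(3) by auto
  consider (below_below) "x 3 + x 1 \<le> 1" "x 3 + x 2 \<le> 1" | (below_above) "x 3 + x 1 \<le> 1" "1 \<le> x 3 + x 2"
    | (above_below) "1 \<le> x 3 + x 1" "x 3 + x 2 \<le> 1" | (above_above) "1 \<le> x 3 + x 1" "1 \<le> x 3 + x 2"
    by linarith
  then show ?thesis
  proof cases
    case below_below
    then show ?thesis
      using x assms(1,2,4,5)
      by (intro bexI[of _ 10] interpolates_weights3[of 0 "1 - x 3 - x 2" "1 - x 3 - x 1" "x 3" "x 1 + x 2 + x 3 - 1" 0 0 0])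
        (simp_all add: lam_affine_indicator_simps insert_commute)
  next
    case below_above
    then show ?thesis
      using x assms(1,2,4,5)
      by (intro bexI[of _ 11] interpolates_weights3[of 0 0 "1 - x 3 - x 1" "1 - x 2" "x 1" 0 "x 3 + x 2 - 1" 0])
        (simp_all add: lam_affine_indicator_simps insert_commute)
  next
    case above_below
    then show ?thesis
      using x assms(1,2,4,5)
      by (intro bexI[of _ 12] interpolates_weights3[of 0 "1 - x 3 - x 2" 0 "1 - x 1" "x 2" "x 3 + x 1 - 1" 0 0])
        (simp_all add: lam_affine_indicator_simps insert_commute)
  next
    case above_above
    then show ?thesis
      using x assms(1,2,4,5)
      by (intro bexI[of _ 13] interpolates_weights3[of 0 0 0 "2 - (x 1 + x 2 + x 3)" "1 - x 3" "x 1 + x 3 - 1" "x 2 + x 3 - 1" 0])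
        (simp_all add: lam_affine_indicator_simps insert_commute)
  qed
qed

lemma interpolating_index_exists:
  assumes "f {} = 0" "f {1,2,3} = 1" "\<forall>i\<in>{1..3}. 0 \<le> x i \<and> x i \<le> 1" "k \<in> {1,2,3}"
  shows "\<exists>i\<in>{4*k-2..4*k+1} \<union> {1,14}. interpolates 3 f (lam f i) x"
proof -
  consider (lower) "x 1 + x 2 + x 3 \<le> 1" | (upper) "2 \<le> x 1 + x 2 + x 3"
    | (middle) "1 \<le> x 1 + x 2 + x 3" "x 1 + x 2 + x 3 \<le> 2"
    by linarith
  then show ?thesis
  proof cases
    case lower
    then show ?thesis using interpolates_lower_corner assms(1,3) by blast
  next
    case upper
    then show ?thesis using interpolates_upper_corner assms(2,3) by blast
  next
    case middle
    then show ?thesis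
      using assms interpolates_octahedron_1 interpolates_octahedron_2 interpolates_octahedron_3
      by fastforce
  qed
qed

theorem mainTheorem5:
  fixes f :: "nat set \<Rightarrow> real" and x :: "nat \<Rightarrow> real" and k :: nat
  assumes "f \<in> Fcl 3"
    and "\<forall>i\<in>{1..3}. 0 \<le> x i \<and> x i \<le> 1"
    and "k \<in> {1,2,3}" and "f \<in> S3 k"
  shows "concave_closure 3 f x =
    min (Min ((\<lambda>i. aff f i x) ` {4*k-2 .. 4*k+1})) (min (aff f 1 x) (aff f 14 x))"
proof -
  let ?I = "{4*k-2..4*k+1} \<union> {1,14}"
  obtain i\<^sub>0 where "i\<^sub>0 \<in> ?I" "interpolates 3 f (lam f i\<^sub>0) x"
    using interpolating_index_exists Fcl3_inequalities(1,2)[OF assms(1)] assms(2,3) by blast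
  then have "concave_closure 3 f x = Min ((\<lambda>i. aff f i x) ` ?I)"
    unfolding aff_def using lam_majorants[OF assms(1,3,4)]
    by (intro concave_closure_eq_Min_majorants[where c = "lam f"]) auto
  also have "\<dots> = min (Min ((\<lambda>i. aff f i x) ` {4*k-2 .. 4*k+1})) (min (aff f 1 x) (aff f 14 x))"
    by (simp add: image_Un Min_Un)
  finally show ?thesis .
qed

end
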